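(* $\displaystyle\min_{\underline y\in\mathcal F}\sum_{j\in\tilde R}c_jy_j\ge\min_{\underline x\in\mathcal F_0}\sum_{j\in\tilde R}c_jx_j$.
   Context: Let $G=(V,E)$ be a finite undirected graph with $V=Q\cup R\cup B$ (pairwise disjoint), where $Q$ is the set of sources, $R$ the set of potential relay locations and $B$ the set of potential sink locations; let $h_{\max}$ be a positive integer and $c_s,c_r\ge0$. Form the augmented graph $\tilde G=(\tilde V,\tilde E)$ with $\tilde V=V\cup\{0\}$, where $0$ is a new vertex (virtual sink), and $\tilde E=E\cup\{\{0,b\}:b\in B\}$. Let $\tilde R=R\cup B$ with node costs $c_j=c_r$ for $j\in R$ and $c_j=c_s$ for $j\in B$. For a source $k\in Q$, a node cut for $k$ is a set $\gamma\subseteq\tilde V\setminus\{k,0\}$ whose deletion disconnects $k$ from $0$ in $\tilde G$; it is minimal if no proper subset is a node cut; $\Gamma^k$ denotes the set of minimal node cuts for $k$. A vector $\underline y=((y_{j,k})_{k\in Q,\,j\in\tilde V\setminus\{k,0\}},(y_j)_{j\in\tilde R})$ belongs to $\mathcal F$ iff: (i) $\sum_{j\in\gamma}y_{j,k}\ge1$ for all $\gamma\in\Gamma^k$, $k\in Q$; (ii) $y_j\ge y_{j,k}$ for all $j\in\tilde R$, $k\in Q$; (iii) $\sum_{j\in\tilde V\setminus\{k,0\}}y_{j,k}\le h_{\max}$ for all $k\in Q$; (iv) all $y_{j,k},y_j\in\{0,1\}$. For $k\in Q$ let $\mathcal P'_k$ be the set of paths in $\tilde G$ from $k$ to $0$ with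 at most $h_{\max}+1$ edges, and let $\mathcal U_0$ be the set of tuples $\underline g=(p_k)_{k\in Q}$ with $p_k\in\mathcal P'_k$. For $\underline g\in\mathcal U_0$ define $\underline x(\underline g)$ by $x_{j,k}=1$ if $j$ is a vertex of $p_k$ and $0$ otherwise ($k\in Q$, $j\in\tilde V\setminus\{k,0\}$), and $x_j=1$ if $x_{j,k}=1$ for some $k\in Q$ and $0$ otherwise ($j\in\tilde R$). Let $\mathcal F_0=\{\underline x(\underline g):\underline g\in\mathcal U_0\}$. A minimum over an empty set is taken to be $+\infty$. *)

theory Defs
  imports "HOL-Library.Extended_Real"
begin

(* Vertices of the augmented graph: None is the virtual sink 0, Some v is v \<in> V. *)

definition aug_V :: "'v set \<Rightarrow> 'v option set" where
  "aug_V V = insert None (Some ` V)"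

definition aug_E :: "'v set set \<Rightarrow> 'v set \<Rightarrow> 'v option set set" where
  "aug_E E B = (image Some) ` E \<union> {{None, Some b} | b. b \<in> B}"

definition aug_R :: "'v set \<Rightarrow> 'v set \<Rightarrow> 'v option set" where
  "aug_R R B = Some ` (R \<union> B)"

definition is_path :: "'a set \<Rightarrow> 'a set set \<Rightarrow> 'a list \<Rightarrow> 'a \<Rightarrow> 'a \<Rightarrow> bool" where
  "is_path VV EE p u w \<longleftrightarrow> p \<noteq> [] \<and> hd p = u \<and> last p = w \<and> distinct p \<and> set p \<subseteq> VV
     \<and> (\<forall>i. Suc i < length p \<longrightarrow> {p ! i, p ! Suc i} \<in> EE)"

definition node_cut :: "'v set \<Rightarrow> 'v set set \<Rightarrow> 'v set \<Rightarrow> 'v \<Rightarrow> 'v option set \<Rightarrow> bool" where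
  "node_cut V E B k \<gamma> \<longleftrightarrow> \<gamma> \<subseteq> aug_V V - {Some k, None} \<and>
     \<not> (\<exists>p. is_path (aug_V V - \<gamma>) (aug_E E B) p (Some k) None)"

definition min_node_cuts :: "'v set \<Rightarrow> 'v set set \<Rightarrow> 'v set \<Rightarrow> 'v \<Rightarrow> 'v option set set" where
  "min_node_cuts V E B k = {\<gamma>. node_cut V E B k \<gamma> \<and> (\<forall>\<gamma>'. \<gamma>' \<subset> \<gamma> \<longrightarrow> \<not> node_cut V E B k \<gamma>')}"

(* A vector y = ((y_{j,k}), (y_j)) is a pair of functions: fst y j k = y_{j,k}, snd y j = y_j.
   Entries outside the index set are fixed to 0 (extensional representation). *)
type_synonym 'v yvec = "('v option \<Rightarrow> 'v \<Rightarrow> real) \<times> ('v option \<Rightarrow> real)"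

definition feasible_F ::
  "'v set \<Rightarrow> 'v set set \<Rightarrow> 'v set \<Rightarrow> 'v set \<Rightarrow> 'v set \<Rightarrow> nat \<Rightarrow> 'v yvec set" where
  "feasible_F V E Q R B hmax = {(yk, yv).
     (\<forall>k j. \<not> (k \<in> Q \<and> j \<in> aug_V V - {Some k, None}) \<longrightarrow> yk j k = 0) \<and>
     (\<forall>j. j \<notin> aug_R R B \<longrightarrow> yv j = 0) \<and>
     (\<forall>k\<in>Q. \<forall>\<gamma>\<in>min_node_cuts V E B k. (\<Sum>j\<in>\<gamma>. yk j k) \<ge> 1) \<and>
     (\<forall>j\<in>aug_R R B. \<forall>k\<in>Q. yv j \<ge> yk j k) \<and>
     (\<forall>k\<in>Q. (\<Sum>j\<in>aug_V V - {Some k, None}. yk j k) \<le> real hmax) \<and>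
     (\<forall>k\<in>Q. \<forall>j\<in>aug_V V - {Some k, None}. yk j k \<in> {0, 1}) \<and>
     (\<forall>j\<in>aug_R R B. yv j \<in> {0, 1})}"

definition paths_P' :: "'v set \<Rightarrow> 'v set set \<Rightarrow> 'v set \<Rightarrow> nat \<Rightarrow> 'v \<Rightarrow> 'v option list set" where
  "paths_P' V E B hmax k = {p. is_path (aug_V V) (aug_E E B) p (Some k) None \<and> length p - 1 \<le> hmax + 1}"

definition x_of :: "'v set \<Rightarrow> 'v set \<Rightarrow> 'v set \<Rightarrow> 'v set \<Rightarrow> ('v \<Rightarrow> 'v option list) \<Rightarrow> 'v yvec" where
  "x_of V Q R B g =
     (let xk = (\<lambda>j k. if k \<in> Q \<and> j \<in> aug_V V - {Some k, None} \<and> j \<in> set (g k) then 1 else 0)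
      in (xk, (\<lambda>j. if j \<in> aug_R R B \<and> (\<exists>k\<in>Q. xk j k = 1) then 1 else 0)))"

definition feasible_F0 ::
  "'v set \<Rightarrow> 'v set set \<Rightarrow> 'v set \<Rightarrow> 'v set \<Rightarrow> 'v set \<Rightarrow> nat \<Rightarrow> 'v yvec set" where
  "feasible_F0 V E Q R B hmax =
     {x_of V Q R B g | g. \<forall>k\<in>Q. g k \<in> paths_P' V E B hmax k}"

definition node_cost :: "'v set \<Rightarrow> real \<Rightarrow> real \<Rightarrow> 'v option \<Rightarrow> real" where
  "node_cost R cs cr j = (if j \<in> Some ` R then cr else cs)"

definition total_cost :: "'v set \<Rightarrow> 'v set \<Rightarrow> real \<Rightarrow> real \<Rightarrow> 'v yvec \<Rightarrow> real" where
  "total_cost R B cs cr y = (\<Sum>j\<in>aug_R R B. node_cost R cs cr j * snd y j)"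

end

theory Submission
  imports Defs
begin

text \<open>Given \<open>y \<in> \<F>\<close> and a source \<open>k\<close>, the vertices \<open>j\<close> with \<open>y\<^sub>j\<^sub>,\<^sub>k = 0\<close> cannot form a node cut
  for \<open>k\<close>: a minimal cut inside them would violate the cut constraint (i). Hence there is a
  \<open>k\<close>-\<open>0\<close> path all of whose inner vertices carry \<open>y\<^sub>j\<^sub>,\<^sub>k = 1\<close>; by the hop constraint (iii) it
  has at most \<open>h\<^sub>m\<^sub>a\<^sub>x + 1\<close> edges, and by (ii) the routing built from these paths uses only
  nodes with \<open>y\<^sub>j = 1\<close>, so it costs no more than \<open>y\<close>.\<close>

lemma feasible_FD:
  assumes "(yk, yv) \<in> feasible_F V E Q R B hmax" and "k \<in> Q"
  shows feasible_F_cut_ge_1: "\<And>\<gamma>. \<gamma> \<in> min_node_cuts V E B k \<Longrightarrow> (\<Sum>j\<in>\<gamma>. yk j k) \<ge> 1"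
    and feasible_F_link_le: "\<And>j. j \<in> aug_R R B \<Longrightarrow> yk j k \<le> yv j"
    and feasible_F_hops_le: "(\<Sum>j\<in>aug_V V - {Some k, None}. yk j k) \<le> real hmax"
    and feasible_F_link_binary: "\<And>j. j \<in> aug_V V - {Some k, None} \<Longrightarrow> yk j k \<in> {0, 1}"
  using assms unfolding feasible_F_def by auto

lemma feasible_F_node_binary:
  "(yk, yv) \<in> feasible_F V E Q R B hmax \<Longrightarrow> j \<in> aug_R R B \<Longrightarrow> yv j \<in> {0, 1}"
  unfolding feasible_F_def by auto

lemma finite_aug_V: "finite V \<Longrightarrow> finite (aug_V V)"
  by (simp add: aug_V_def)

lemma is_path_mono: "is_path A EE p u w \<Longrightarrow> A \<subseteq> A' \<Longrightarrow> is_path A' EE p u w"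
  unfolding is_path_def by auto

lemma is_path_length_le:
  assumes "is_path VV EE p u w" and "set p \<subseteq> insert u (insert w T)" and "finite T"
  shows "length p \<le> card T + 2"
proof -
  have "length p = card (set p)"
    using assms(1) by (simp add: is_path_def distinct_card)
  also have "\<dots> \<le> card (insert u (insert w T))"
    using assms(2,3) by (intro card_mono) auto
  also have "\<dots> \<le> card T + 2"
    using assms(3) by (simp add: card_insert_if)
  finally show ?thesis .
qed

lemma node_cut_contains_min_node_cut:
  assumes "finite \<gamma>" and "node_cut V E B k \<gamma>"
  shows "\<exists>\<gamma>\<^sub>0\<subseteq>\<gamma>. \<gamma>\<^sub>0 \<in> min_node_cuts V E B k"
  using assms
proof (induction \<gamma> rule: finite_psubset_induct)
  case (psubset \<gamma>)
  show ?case
  proof (cases "\<gamma> \<in> min_node_cuts V E B k")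
    case False
    then obtain \<gamma>' where "\<gamma>' \<subset> \<gamma>" "node_cut V E B k \<gamma>'"
      using psubset.prems by (auto simp: min_node_cuts_def)
    then show ?thesis
      using psubset.IH by (meson psubset_imp_subset subset_trans)
  qed blast
qed

lemma feasible_F_path_in_support:
  assumes "finite V" and y: "(yk, yv) \<in> feasible_F V E Q R B hmax" and "k \<in> Q"
  shows "\<exists>p. is_path (aug_V V - {j \<in> aug_V V - {Some k, None}. yk j k = 0})
                (aug_E E B) p (Some k) None"
proof (rule ccontr)
  define \<gamma> where "\<gamma> = {j \<in> aug_V V - {Some k, None}. yk j k = 0}"
  assume "\<not> ?thesis"
  then have cut: "node_cut V E B k \<gamma>"
    unfolding node_cut_def \<gamma>_def by auto
  have "finite \<gamma>"
    unfolding \<gamma>_def using finite_aug_V[OF \<open>finite V\<close>] by auto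
  then obtain \<gamma>\<^sub>0 where "\<gamma>\<^sub>0 \<subseteq> \<gamma>" "\<gamma>\<^sub>0 \<in> min_node_cuts V E B k"
    using node_cut_contains_min_node_cut[OF _ cut] by metis
  then have "(\<Sum>j\<in>\<gamma>\<^sub>0. yk j k) \<ge> 1"
    using feasible_F_cut_ge_1[OF y \<open>k \<in> Q\<close>] by blast
  moreover have "(\<Sum>j\<in>\<gamma>\<^sub>0. yk j k) = 0"
    using \<open>\<gamma>\<^sub>0 \<subseteq> \<gamma>\<close> unfolding \<gamma>_def by (intro sum.neutral) auto
  ultimately show False
    by simp
qed

lemma feasible_F_support_card_le:
  assumes "finite V" and y: "(yk, yv) \<in> feasible_F V E Q R B hmax" and "k \<in> Q"
  shows "card {j \<in> aug_V V - {Some k, None}. yk j k = 1} \<le> hmax"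
proof -
  let ?T = "{j \<in> aug_V V - {Some k, None}. yk j k = 1}"
  have "real (card ?T) = (\<Sum>j\<in>?T. yk j k)"
    by simp
  also have "\<dots> = (\<Sum>j\<in>aug_V V - {Some k, None}. yk j k)"
    using finite_aug_V[OF \<open>finite V\<close>] feasible_F_link_binary[OF y \<open>k \<in> Q\<close>]
    by (intro sum.mono_neutral_left) auto
  also have "\<dots> \<le> real hmax"
    using feasible_F_hops_le[OF y \<open>k \<in> Q\<close>] .
  finally show ?thesis
    by simp
qed

lemma feasible_F_path_in_paths_P':
  assumes "finite V" and y: "(yk, yv) \<in> feasible_F V E Q R B hmax" and "k \<in> Q"
  shows "\<exists>p\<in>paths_P' V E B hmax k. \<forall>j\<in>set p - {Some k, None}. yk j k = 1"
proof -
  let ?T = "{j \<in> aug_V V - {Some k, None}. yk j k = 1}"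
  obtain p where p: "is_path (aug_V V - {j \<in> aug_V V - {Some k, None}. yk j k = 0})
                       (aug_E E B) p (Some k) None"
    using feasible_F_path_in_support[OF assms] by blast
  have inner: "\<forall>j\<in>set p - {Some k, None}. yk j k = 1"
  proof
    fix j assume "j \<in> set p - {Some k, None}"
    then have "j \<in> aug_V V - {Some k, None}" and "yk j k \<noteq> 0"
      using p by (auto simp: is_path_def)
    then show "yk j k = 1"
      using feasible_F_link_binary[OF y \<open>k \<in> Q\<close>] by blast
  qed
  then have "set p \<subseteq> insert (Some k) (insert None ?T)"
    using p by (auto simp: is_path_def)
  then have "length p \<le> card ?T + 2"
    using p finite_aug_V[OF \<open>finite V\<close>] by (intro is_path_length_le) auto
  then have "length p - 1 \<le> hmax + 1"
    using feasible_F_support_card_le[OF assms] by linarith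
  moreover have "is_path (aug_V V) (aug_E E B) p (Some k) None"
    using p by (rule is_path_mono) blast
  ultimately have "p \<in> paths_P' V E B hmax k"
    by (simp add: paths_P'_def)
  with inner show ?thesis
    by blast
qed

lemma feasible_F0_below_feasible_F:
  assumes "finite V" and "y \<in> feasible_F V E Q R B hmax"
  shows "\<exists>x\<in>feasible_F0 V E Q R B hmax. \<forall>j\<in>aug_R R B. snd x j \<le> snd y j"
proof -
  obtain yk yv where y_eq: "y = (yk, yv)"
    by (cases y)
  with assms(2) have y: "(yk, yv) \<in> feasible_F V E Q R B hmax"
    by simp
  have "\<forall>k\<in>Q. \<exists>p\<in>paths_P' V E B hmax k. \<forall>j\<in>set p - {Some k, None}. yk j k = 1"
    using feasible_F_path_in_paths_P'[OF \<open>finite V\<close> y] by blast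
  then obtain g where g: "\<forall>k\<in>Q. g k \<in> paths_P' V E B hmax k \<and>
                           (\<forall>j\<in>set (g k) - {Some k, None}. yk j k = 1)"
    by (metis bchoice)
  have "x_of V Q R B g \<in> feasible_F0 V E Q R B hmax"
    unfolding feasible_F0_def using g by blast
  moreover have "snd (x_of V Q R B g) j \<le> yv j" if "j \<in> aug_R R B" for j
  proof (cases "snd (x_of V Q R B g) j = 0")
    case True
    then show ?thesis
      using feasible_F_node_binary[OF y that] by auto
  next
    case False
    then obtain k where k: "k \<in> Q" "j \<in> aug_V V - {Some k, None}" "j \<in> set (g k)"
      unfolding x_of_def Let_def by (auto split: if_splits)
    then have "yk j k = 1"
      using g by blast
    moreover have "yk j k \<le> yv j"
      using feasible_F_link_le[OF y k(1) that] .
    moreover have "snd (x_of V Q R B g) j \<le> 1"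
      by (simp add: x_of_def Let_def)
    ultimately show ?thesis
      by linarith
  qed
  ultimately show ?thesis
    unfolding y_eq snd_conv by blast
qed

lemma total_cost_mono:
  assumes "cs \<ge> 0" and "cr \<ge> 0" and "\<forall>j\<in>aug_R R B. snd x j \<le> snd y j"
  shows "total_cost R B cs cr x \<le> total_cost R B cs cr y"
  unfolding total_cost_def
proof (rule sum_mono)
  fix j assume "j \<in> aug_R R B"
  moreover have "node_cost R cs cr j \<ge> 0"
    using assms(1,2) by (simp add: node_cost_def)
  ultimately show "node_cost R cs cr j * snd x j \<le> node_cost R cs cr j * snd y j"
    using assms(3) by (simp add: mult_left_mono)
qed

theorem corollary3:
  fixes V :: "'v set" and E :: "'v set set" and Q R B :: "'v set"
    and hmax :: nat and cs cr :: real
  assumes "finite V"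
    and "\<forall>e\<in>E. e \<subseteq> V \<and> card e = 2"
    and "V = Q \<union> R \<union> B"
    and "Q \<inter> R = {}" and "Q \<inter> B = {}" and "R \<inter> B = {}"
    and "hmax > 0"
    and "cs \<ge> 0" and "cr \<ge> 0"
  shows "(INF y\<in>feasible_F V E Q R B hmax. ereal (total_cost R B cs cr y))
           \<ge> (INF x\<in>feasible_F0 V E Q R B hmax. ereal (total_cost R B cs cr x))"
proof (rule INF_mono)
  fix y assume y: "y \<in> feasible_F V E Q R B hmax"
  then obtain x where x: "x \<in> feasible_F0 V E Q R B hmax"
    and below: "\<forall>j\<in>aug_R R B. snd x j \<le> snd y j"
    using feasible_F0_below_feasible_F[OF \<open>finite V\<close>] by blast
  have "total_cost R B cs cr x \<le> total_cost R B cs cr y"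
    by (rule total_cost_mono[OF \<open>cs \<ge> 0\<close> \<open>cr \<ge> 0\<close> below])
  with x show "\<exists>x\<in>feasible_F0 V E Q R B hmax.
               ereal (total_cost R B cs cr x) \<le> ereal (total_cost R B cs cr y)"
    by auto
qed

end
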